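(* Consider the Variance-shifting Procedure described in the context, and suppose that in iteration $k$ the procedure reaches Step 2 (i.e. $\mathrm{Reroute}(\mathcal{A}_{k-1},\tau)$ was feasible with optimal solution $(\bar p^k,\bar f^k,\bar\theta^k)$). Let $(\bar f,\mathcal{A})$ be an arbitrary compatible pair. Then there exists $0<\gamma\le 1$ such that for all $0\le t\le\gamma$, the pair $$\bigl((1-t)\bar f^k+t\bar f,\;(1-t)\mathcal{A}_{k-1}+t\mathcal{A}\bigr)$$ is compatible.
   Context: Network (DC model): bus set $\mathcal{B}$, $n=|\mathcal{B}|$; line set $\mathcal{E}$, $m=|\mathcal{E}|$; each line $ij$ has susceptance $b_{ij}>0$ and limit $f^{\max}_{ij}>0$. $B$ is the $n\times n$ bus susceptance matrix; $\hat B$ is $B$ with last row and column removed (assumed invertible); $\breve B=\begin{pmatrix}\hat B^{-1}&0\\0&0\end{pmatrix}$ with $i$-th row $\breve B_i$; $\pi_{ij}=\breve B_i^T-\breve B_j^T$. $\mathcal{G}\subseteq\mathcal{B}$ is the set of generator buses, with limits $p_i^{\min}\le p_i^{\max}$ and costs $c_i(p)=c_{i0}p^2+c_{i1}p+c_{i2}$, $c_{i0}\ge 0$. $d\in\mathbb{R}^n$ are loads, $\mu\in\mathbb{R}^n$ mean stochastic injections, $\omega$ a zero-mean random vector with covariance $\Omega$. $\mathcal{K}$ is a given convex set of $n\times n$ participation matrices $\mathcal{A}$ (with rows $\mathcal{A}_i$). Safety parameters $\nu_{ij}\ge0$ (lines) and $\nu_i\ge0$ (generators) are given. For a matrix $\mathcal{A}$,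 $\mathbf{V}(\mathcal{A})\in\mathbb{R}^m$ has entries $\mathbf{V}(\mathcal{A})_{ij}=b_{ij}^2\pi_{ij}^T(I-\mathcal{A})\Omega(I-\mathcal{A}^T)\pi_{ij}$ (line flow variances). Compatibility: a pair $(\bar f,\mathcal{A})$ with $\bar f\in\mathbb{R}^m$ is compatible if $\mathcal{A}\in\mathcal{K}$ and there exist $\bar p\in\mathbb{R}^n$ (with $\bar p_i=0$ for $i\notin\mathcal{G}$) and $\bar\theta\in\mathbb{R}^n$ with $B\bar\theta=\bar p+\mu-d$; $\bar f_{ij}=b_{ij}(\bar\theta_i-\bar\theta_j)$ and $|\bar f_{ij}|+\nu_{ij}\sqrt{\mathbf{V}(\mathcal{A})_{ij}}\le f^{\max}_{ij}$ for all $ij\in\mathcal{E}$; and $p_i^{\min}+\nu_i\sqrt{\mathcal{A}_i^T\Omega\mathcal{A}_i}\le\bar p_i\le p_i^{\max}-\nu_i\sqrt{\mathcal{A}_i^T\Omega\mathcal{A}_i}$ for all $i\in\mathcal{G}$ (i.e. they extend to a feasible solution of the safety-constrained DC-OPF, whose objective is $\sum_{i\in\mathcal{G}}[c_{i0}(\bar p_i^2+\mathcal{A}_i^T\Omega\mathcal{A}_i)+c_{i1}\bar p_i+c_{i2}]$). Variance metric: for each line $ij$ a convex nondecreasing function $\Delta_{ij}:[0,\infty)\to[0,\infty)$, and for each flow vector $\bar f$ a set $\mathcal{F}(\bar f)\subseteq\mathcal{E}$ depending only on $\bar f$; $\Delta(\bar f,s^2)=\sum_{ij\in\mathcal{F}(\bar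 f)}\Delta_{ij}(s^2_{ij})$. Subproblems. For $\hat{\mathcal{A}}\in\mathcal{K}$ and $0<\tau<1$, $\mathrm{Reroute}(\hat{\mathcal{A}},\tau)$ is: minimize $\sum_{i\in\mathcal{G}}[c_{i0}(\bar p_i^2+\hat{\mathcal{A}}_i^T\Omega\hat{\mathcal{A}}_i)+c_{i1}\bar p_i+c_{i2}]$ over $\bar p,\bar f,\bar\theta$ subject to $B\bar\theta=\bar p+\mu-d$, $\bar f_{ij}=b_{ij}(\bar\theta_i-\bar\theta_j)$, $|\bar f_{ij}|+\nu_{ij}\sqrt{\mathbf{V}(\hat{\mathcal{A}})_{ij}}\le(1-\tau)f^{\max}_{ij}$ for all $ij\in\mathcal{E}$, and the generator constraints above with $\hat{\mathcal{A}}$. For $\bar f'$, $\mathcal{A}'$, let $\mathbf{T}(\bar f',\mathcal{A}',\tau)=\{ij\in\mathcal{E}:|\bar f'_{ij}|+\nu_{ij}\sqrt{\mathbf{V}(\mathcal{A}')_{ij}}\ge(1-\tau)f^{\max}_{ij}\}$. $\mathrm{VShift}(\bar f',\mathcal{A}',\tau)$ is: minimize $\sum_{ij\in\mathcal{F}(\bar f')}\Delta_{ij}(s_{ij}^2)$ over $s\in\mathbb{R}^m_{\ge0}$, $\mathcal{A}$ subject to $\mathcal{A}\in\mathcal{K}$, $s_{ij}^2\ge\mathbf{V}(\mathcal{A})_{ij}$ for all $ij\in\mathcal{E}$, and $|\bar f'_{ij}|+\nu_{ij}s_{ij}\le f^{\max}_{ij}$ for $ij\in\mathbf{T}(\bar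 f',\mathcal{A}',\tau)$. Variance-shifting Procedure. Input: a feasible solution $(\bar p^0,\bar f^0,\mathcal{A}_0)$ of the safety-constrained problem (so $(\bar f^0,\mathcal{A}_0)$ is compatible), the metric $\Delta$, $0<\tau<1$, and an iteration bound $N\ge1$; set $s^2_0=\mathbf{V}(\mathcal{A}_0)$. For $k=1,\dots,N$: (1) solve $\mathrm{Reroute}(\mathcal{A}_{k-1},\tau)$; if infeasible, stop; else let $(\bar p^k,\bar f^k,\bar\theta^k)$ be an optimal solution. (2) Solve $\mathrm{VShift}(\bar f^k,\mathcal{A}_{k-1},\tau)$, with optimal solution $(\hat s_k,\hat{\mathcal{A}}_k)$. (3) Choose the largest $\lambda\in(0,1]$ such that $(\bar f^k,(1-\lambda)\mathcal{A}_{k-1}+\lambda\hat{\mathcal{A}}_k)$ is compatible. (4) Set $\mathcal{A}_k=(1-\lambda)\mathcal{A}_{k-1}+\lambda\hat{\mathcal{A}}_k$ and $s^2_k=\mathbf{V}(\mathcal{A}_k)$. (5) If $\Delta(\bar f^k,s^2_k)\ge\Delta(\bar f^{k-1},s^2_{k-1})$, stop; otherwise reset $\tau\leftarrow\tau/2$ and continue. *)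

theory Defs
  imports "HOL-Analysis.Analysis"
begin

text \<open>
  Buses are 0..<nb (the last bus is nb-1),
  lines are 0..<nl; line l connects bus fr l to bus to l.
  n x n matrices and vectors are functions on nat, only entries below nb matter.
\<close>

record net =
  nb :: nat
  nl :: nat
  fr :: "nat \<Rightarrow> nat"
  to :: "nat \<Rightarrow> nat"
  sus :: "nat \<Rightarrow> real"
  fmax :: "nat \<Rightarrow> real"
  gens :: "nat set"
  pmin :: "nat \<Rightarrow> real"
  pmax :: "nat \<Rightarrow> real"
  c0 :: "nat \<Rightarrow> real"
  c1 :: "nat \<Rightarrow> real"
  c2 :: "nat \<Rightarrow> real"
  load :: "nat \<Rightarrow> real"
  mu :: "nat \<Rightarrow> real"
  Omega :: "nat \<Rightarrow> nat \<Rightarrow> real"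
  Kset :: "(nat \<Rightarrow> nat \<Rightarrow> real) set"
  nu_line :: "nat \<Rightarrow> real"
  nu_gen :: "nat \<Rightarrow> real"

definition delta :: "nat \<Rightarrow> nat \<Rightarrow> real" where
  "delta i j = (if i = j then 1 else 0)"

definition Bmat :: "net \<Rightarrow> nat \<Rightarrow> nat \<Rightarrow> real" where
  "Bmat N i j = (\<Sum>l<nl N. sus N l * (delta (fr N l) i - delta (to N l) i)
                                    * (delta (fr N l) j - delta (to N l) j))"

text \<open>M is a two-sided inverse of hat B (B without last row/column), padded by zeros.\<close>
definition is_hatB_inv :: "net \<Rightarrow> (nat \<Rightarrow> nat \<Rightarrow> real) \<Rightarrow> bool" where
  "is_hatB_inv N M \<longleftrightarrow>
     (\<forall>i<nb N - 1. \<forall>j<nb N - 1. (\<Sum>k<nb N - 1. M i k * Bmat N k j) = delta i j) \<and>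
     (\<forall>i<nb N - 1. \<forall>j<nb N - 1. (\<Sum>k<nb N - 1. Bmat N i k * M k j) = delta i j) \<and>
     (\<forall>i j. \<not> (i < nb N - 1 \<and> j < nb N - 1) \<longrightarrow> M i j = 0)"

definition Bbreve :: "net \<Rightarrow> nat \<Rightarrow> nat \<Rightarrow> real" where
  "Bbreve N = (THE M. is_hatB_inv N M)"

definition piv :: "net \<Rightarrow> nat \<Rightarrow> nat \<Rightarrow> real" where
  "piv N l k = Bbreve N (fr N l) k - Bbreve N (to N l) k"

definition Vvar :: "net \<Rightarrow> (nat \<Rightarrow> nat \<Rightarrow> real) \<Rightarrow> nat \<Rightarrow> real" where
  "Vvar N A l =
     (let w = (\<lambda>k. \<Sum>j<nb N. piv N l j * (delta j k - A j k))
      in (sus N l)\<^sup>2 * (\<Sum>k<nb N. \<Sum>k'<nb N. w k * Omega N k k' * w k'))"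

definition rowvar :: "net \<Rightarrow> (nat \<Rightarrow> nat \<Rightarrow> real) \<Rightarrow> nat \<Rightarrow> real" where
  "rowvar N A i = (\<Sum>j<nb N. \<Sum>k<nb N. A i j * Omega N j k * A i k)"

definition mixA :: "real \<Rightarrow> (nat \<Rightarrow> nat \<Rightarrow> real) \<Rightarrow> (nat \<Rightarrow> nat \<Rightarrow> real) \<Rightarrow> nat \<Rightarrow> nat \<Rightarrow> real" where
  "mixA t A A' = (\<lambda>i j. (1 - t) * A i j + t * A' i j)"

definition mixv :: "real \<Rightarrow> (nat \<Rightarrow> real) \<Rightarrow> (nat \<Rightarrow> real) \<Rightarrow> nat \<Rightarrow> real" where
  "mixv t f f' = (\<lambda>l. (1 - t) * f l + t * f' l)"

definition net_ok :: "net \<Rightarrow> bool" where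
  "net_ok N \<longleftrightarrow>
     1 \<le> nb N \<and>
     (\<forall>l<nl N. fr N l < nb N \<and> to N l < nb N \<and> fr N l \<noteq> to N l
               \<and> sus N l > 0 \<and> fmax N l > 0 \<and> nu_line N l \<ge> 0) \<and>
     gens N \<subseteq> {..<nb N} \<and>
     (\<forall>i\<in>gens N. pmin N i \<le> pmax N i \<and> c0 N i \<ge> 0 \<and> nu_gen N i \<ge> 0) \<and>
     (\<forall>i<nb N. \<forall>j<nb N. Omega N i j = Omega N j i) \<and>
     (\<forall>x. (\<Sum>i<nb N. \<Sum>j<nb N. x i * Omega N i j * x j) \<ge> 0) \<and>
     (\<forall>A\<in>Kset N. \<forall>A'\<in>Kset N. \<forall>t\<in>{0..1}. mixA t A A' \<in> Kset N) \<and>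
     (\<exists>M. is_hatB_inv N M)"

text \<open>DC constraints with line limits scaled by c (c = 1: safety-constrained problem,
  c = 1 - tau: Reroute).\<close>
definition dc_cons :: "net \<Rightarrow> real \<Rightarrow> (nat \<Rightarrow> nat \<Rightarrow> real) \<Rightarrow> (nat \<Rightarrow> real)
                        \<Rightarrow> (nat \<Rightarrow> real) \<Rightarrow> (nat \<Rightarrow> real) \<Rightarrow> bool" where
  "dc_cons N c A p th f \<longleftrightarrow>
     (\<forall>i<nb N. i \<notin> gens N \<longrightarrow> p i = 0) \<and>
     (\<forall>i<nb N. (\<Sum>j<nb N. Bmat N i j * th j) = p i + mu N i - load N i) \<and>
     (\<forall>l<nl N. f l = sus N l * (th (fr N l) - th (to N l))) \<and>
     (\<forall>l<nl N. \<bar>f l\<bar> + nu_line N l * sqrt (Vvar N A l) \<le> c * fmax N l) \<and>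
     (\<forall>i\<in>gens N. pmin N i + nu_gen N i * sqrt (rowvar N A i) \<le> p i \<and>
                  p i \<le> pmax N i - nu_gen N i * sqrt (rowvar N A i))"

definition sc_feasible :: "net \<Rightarrow> (nat \<Rightarrow> real) \<Rightarrow> (nat \<Rightarrow> real) \<Rightarrow> (nat \<Rightarrow> nat \<Rightarrow> real) \<Rightarrow> bool" where
  "sc_feasible N p f A \<longleftrightarrow> A \<in> Kset N \<and> (\<exists>th. dc_cons N 1 A p th f)"

definition compatible :: "net \<Rightarrow> (nat \<Rightarrow> real) \<Rightarrow> (nat \<Rightarrow> nat \<Rightarrow> real) \<Rightarrow> bool" where
  "compatible N f A \<longleftrightarrow> A \<in> Kset N \<and> (\<exists>p th. dc_cons N 1 A p th f)"

definition cost :: "net \<Rightarrow> (nat \<Rightarrow> nat \<Rightarrow> real) \<Rightarrow> (nat \<Rightarrow> real) \<Rightarrow> real" where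
  "cost N A p = (\<Sum>i\<in>gens N. c0 N i * ((p i)\<^sup>2 + rowvar N A i) + c1 N i * p i + c2 N i)"

definition reroute_opt :: "net \<Rightarrow> (nat \<Rightarrow> nat \<Rightarrow> real) \<Rightarrow> real
                            \<Rightarrow> (nat \<Rightarrow> real) \<Rightarrow> (nat \<Rightarrow> real) \<Rightarrow> (nat \<Rightarrow> real) \<Rightarrow> bool" where
  "reroute_opt N A tau p f th \<longleftrightarrow>
     dc_cons N (1 - tau) A p th f \<and>
     (\<forall>p' f' th'. dc_cons N (1 - tau) A p' th' f' \<longrightarrow> cost N A p \<le> cost N A p')"

definition Delta :: "((nat \<Rightarrow> real) \<Rightarrow> nat set) \<Rightarrow> (nat \<Rightarrow> real \<Rightarrow> real)
                      \<Rightarrow> (nat \<Rightarrow> real) \<Rightarrow> (nat \<Rightarrow> real) \<Rightarrow> real" where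
  "Delta F Dl f s2 = (\<Sum>l\<in>F f. Dl l (s2 l))"

definition metric_ok :: "net \<Rightarrow> ((nat \<Rightarrow> real) \<Rightarrow> nat set) \<Rightarrow> (nat \<Rightarrow> real \<Rightarrow> real) \<Rightarrow> bool" where
  "metric_ok N F Dl \<longleftrightarrow>
     (\<forall>l<nl N. convex_on {0..} (Dl l) \<and> mono_on {0..} (Dl l) \<and> (\<forall>x\<ge>0. Dl l x \<ge> 0)) \<and>
     (\<forall>f. F f \<subseteq> {..<nl N})"

definition Tset :: "net \<Rightarrow> (nat \<Rightarrow> real) \<Rightarrow> (nat \<Rightarrow> nat \<Rightarrow> real) \<Rightarrow> real \<Rightarrow> nat set" where
  "Tset N f A tau = {l. l < nl N \<and> \<bar>f l\<bar> + nu_line N l * sqrt (Vvar N A l) \<ge> (1 - tau) * fmax N l}"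

definition vshift_feas :: "net \<Rightarrow> (nat \<Rightarrow> real) \<Rightarrow> (nat \<Rightarrow> nat \<Rightarrow> real) \<Rightarrow> real
                             \<Rightarrow> (nat \<Rightarrow> real) \<Rightarrow> (nat \<Rightarrow> nat \<Rightarrow> real) \<Rightarrow> bool" where
  "vshift_feas N f' A' tau s A \<longleftrightarrow>
     A \<in> Kset N \<and>
     (\<forall>l<nl N. s l \<ge> 0 \<and> (s l)\<^sup>2 \<ge> Vvar N A l) \<and>
     (\<forall>l\<in>Tset N f' A' tau. \<bar>f' l\<bar> + nu_line N l * s l \<le> fmax N l)"

definition vshift_opt :: "net \<Rightarrow> ((nat \<Rightarrow> real) \<Rightarrow> nat set) \<Rightarrow> (nat \<Rightarrow> real \<Rightarrow> real)
                           \<Rightarrow> (nat \<Rightarrow> real) \<Rightarrow> (nat \<Rightarrow> nat \<Rightarrow> real) \<Rightarrow> real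
                           \<Rightarrow> (nat \<Rightarrow> real) \<Rightarrow> (nat \<Rightarrow> nat \<Rightarrow> real) \<Rightarrow> bool" where
  "vshift_opt N F Dl f' A' tau s A \<longleftrightarrow>
     vshift_feas N f' A' tau s A \<and>
     (\<forall>s2 A2. vshift_feas N f' A' tau s2 A2 \<longrightarrow>
        (\<Sum>l\<in>F f'. Dl l ((s l)\<^sup>2)) \<le> (\<Sum>l\<in>F f'. Dl l ((s2 l)\<^sup>2)))"

text \<open>
  A run of the Variance-shifting Procedure that completes iterations 1..k-1
  (without stopping) and in iteration k finds Reroute(A_{k-1}, tau_k) feasible with
  optimal solution (p_k, f_k, th_k), i.e. reaches Step 2 of iteration k.
  Asq j = A_j, tausq j = value of tau used in iteration j, shat/Ahat/lam the
  VShift solutions and step sizes of completed iterations.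
\<close>
definition vs_reaches_step2 ::
  "net \<Rightarrow> ((nat \<Rightarrow> real) \<Rightarrow> nat set) \<Rightarrow> (nat \<Rightarrow> real \<Rightarrow> real)
   \<Rightarrow> (nat \<Rightarrow> real) \<Rightarrow> (nat \<Rightarrow> real) \<Rightarrow> (nat \<Rightarrow> nat \<Rightarrow> real) \<Rightarrow> real \<Rightarrow> nat \<Rightarrow> nat
   \<Rightarrow> (nat \<Rightarrow> nat \<Rightarrow> nat \<Rightarrow> real) \<Rightarrow> (nat \<Rightarrow> real)
   \<Rightarrow> (nat \<Rightarrow> nat \<Rightarrow> real) \<Rightarrow> (nat \<Rightarrow> nat \<Rightarrow> real) \<Rightarrow> (nat \<Rightarrow> nat \<Rightarrow> real)
   \<Rightarrow> (nat \<Rightarrow> nat \<Rightarrow> real) \<Rightarrow> (nat \<Rightarrow> nat \<Rightarrow> nat \<Rightarrow> real) \<Rightarrow> (nat \<Rightarrow> real) \<Rightarrow> bool" where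
  "vs_reaches_step2 N F Dl p0 f0 A0 tau0 Nit k Asq tausq psq fsq thsq shat Ahat lam \<longleftrightarrow>
     0 < tau0 \<and> tau0 < 1 \<and> 1 \<le> Nit \<and> 1 \<le> k \<and> k \<le> Nit \<and>
     sc_feasible N p0 f0 A0 \<and>
     Asq 0 = A0 \<and> psq 0 = p0 \<and> fsq 0 = f0 \<and> tausq 1 = tau0 \<and>
     (\<forall>j\<in>{1..k}. reroute_opt N (Asq (j - 1)) (tausq j) (psq j) (fsq j) (thsq j)) \<and>
     (\<forall>j\<in>{1..<k}.
        vshift_opt N F Dl (fsq j) (Asq (j - 1)) (tausq j) (shat j) (Ahat j) \<and>
        0 < lam j \<and> lam j \<le> 1 \<and>
        compatible N (fsq j) (mixA (lam j) (Asq (j - 1)) (Ahat j)) \<and>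
        (\<forall>lam'. 0 < lam' \<and> lam' \<le> 1 \<and> compatible N (fsq j) (mixA lam' (Asq (j - 1)) (Ahat j))
                 \<longrightarrow> lam' \<le> lam j) \<and>
        Asq j = mixA (lam j) (Asq (j - 1)) (Ahat j) \<and>
        Delta F Dl (fsq j) (Vvar N (Asq j)) < Delta F Dl (fsq (j - 1)) (Vvar N (Asq (j - 1))) \<and>
        tausq (j + 1) = tausq j / 2)"

end

theory Submission imports Defs begin

(* Along the segment the power injections, angles and flows can be mixed linearly, and the
   uncertainty margins sqrt (Vvar N A l) and sqrt (rowvar N A i) are seminorms of affine
   functions of A (Omega is positive semidefinite), hence convex in A. So the set of compatible
   pairs is convex. The Reroute solution of iteration k satisfies even the tightened line limits
   (1 - tau) fmax with tau > 0, and A_{k-1} lies in K, so (f_k, A_{k-1}) is compatible and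
   gamma = 1 works. *)

definition bilin_form :: "'i set \<Rightarrow> ('i \<Rightarrow> 'i \<Rightarrow> real) \<Rightarrow> ('i \<Rightarrow> real) \<Rightarrow> ('i \<Rightarrow> real) \<Rightarrow> real" where
  "bilin_form S Q x y = (\<Sum>i\<in>S. \<Sum>j\<in>S. x i * Q i j * y j)"

lemma bilin_form_lincomb:
  "bilin_form S Q (\<lambda>i. a * x i + b * y i) (\<lambda>i. a * x i + b * y i)
     = a\<^sup>2 * bilin_form S Q x x + a * b * (bilin_form S Q x y + bilin_form S Q y x)
       + b\<^sup>2 * bilin_form S Q y y"
  unfolding bilin_form_def
  by (simp add: algebra_simps power2_eq_square sum.distrib sum_distrib_left)

lemma nonneg_quadratic_imp_coeff_le:
  fixes a b c :: real
  assumes nonneg: "\<And>s. a + s * c + s\<^sup>2 * b \<ge> 0" and "a \<ge> 0" "b \<ge> 0"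
  shows "c \<le> 2 * sqrt a * sqrt b"
proof (cases "b = 0")
  case True
  have False if "c > 0"
    using nonneg[of "- (a + 1) / c"] True that by simp
  then show ?thesis using True by fastforce
next
  case False
  with \<open>b \<ge> 0\<close> have b: "b > 0" by simp
  have "a + (- c / (2 * b)) * c + (- c / (2 * b))\<^sup>2 * b \<ge> 0" by (rule nonneg)
  then have "c\<^sup>2 \<le> 4 * a * b" using b by (simp add: power2_eq_square field_simps)
  then have "\<bar>c\<bar> \<le> sqrt (4 * a * b)" by (metis real_sqrt_abs real_sqrt_le_mono)
  then show ?thesis by (simp add: real_sqrt_mult)
qed

lemma sqrt_bilin_form_convex:
  assumes psd: "\<And>z. bilin_form S Q z z \<ge> 0" and t: "0 \<le> t" "t \<le> 1"
  shows "sqrt (bilin_form S Q (\<lambda>i. (1 - t) * x i + t * y i) (\<lambda>i. (1 - t) * x i + t * y i))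
         \<le> (1 - t) * sqrt (bilin_form S Q x x) + t * sqrt (bilin_form S Q y y)"
proof -
  let ?a = "bilin_form S Q x x" and ?b = "bilin_form S Q y y"
  let ?c = "bilin_form S Q x y + bilin_form S Q y x"
  have "?a + s * ?c + s\<^sup>2 * ?b \<ge> 0" for s
    using psd[of "\<lambda>i. 1 * x i + s * y i"] unfolding bilin_form_lincomb by simp
  then have c: "?c \<le> 2 * sqrt ?a * sqrt ?b"
    by (rule nonneg_quadratic_imp_coeff_le[OF _ psd psd])
  have "bilin_form S Q (\<lambda>i. (1 - t) * x i + t * y i) (\<lambda>i. (1 - t) * x i + t * y i)
        = (1 - t)\<^sup>2 * ?a + (1 - t) * t * ?c + t\<^sup>2 * ?b"
    by (rule bilin_form_lincomb)
  also have "\<dots> \<le> (1 - t)\<^sup>2 * ?a + (1 - t) * t * (2 * sqrt ?a * sqrt ?b) + t\<^sup>2 * ?b"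
    using c t by (simp add: mult_left_mono)
  also have "\<dots> = ((1 - t) * sqrt ?a + t * sqrt ?b)\<^sup>2"
    using psd[of x] psd[of y] by (simp add: power2_eq_square algebra_simps)
  finally show ?thesis
    using t psd[of x] psd[of y] by (metis real_le_lsqrt real_sqrt_ge_zero add_nonneg_nonneg
        diff_ge_0_iff_ge mult_nonneg_nonneg real_sqrt_le_iff)
qed

lemma net_ok_Omega_psd: "net_ok N \<Longrightarrow> bilin_form {..<nb N} (Omega N) z z \<ge> 0"
  unfolding net_ok_def bilin_form_def by blast

lemma sqrt_rowvar_mixA_le:
  assumes "net_ok N" "0 \<le> t" "t \<le> 1"
  shows "sqrt (rowvar N (mixA t A B) i) \<le> (1 - t) * sqrt (rowvar N A i) + t * sqrt (rowvar N B i)"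
proof -
  have rowvar: "rowvar N C i = bilin_form {..<nb N} (Omega N) (C i) (C i)" for C
    unfolding rowvar_def bilin_form_def by simp
  show ?thesis
    unfolding rowvar mixA_def
    using sqrt_bilin_form_convex[OF net_ok_Omega_psd[OF assms(1)] assms(2,3)] by simp
qed

definition flow_weights :: "net \<Rightarrow> (nat \<Rightarrow> nat \<Rightarrow> real) \<Rightarrow> nat \<Rightarrow> nat \<Rightarrow> real" where
  "flow_weights N A l = (\<lambda>k. \<Sum>j<nb N. piv N l j * (delta j k - A j k))"

lemma flow_weights_mixA:
  "flow_weights N (mixA t A B) l = (\<lambda>k. (1 - t) * flow_weights N A l k + t * flow_weights N B l k)"
  unfolding flow_weights_def mixA_def
  by (rule ext) (simp add: sum_distrib_left sum.distrib[symmetric] algebra_simps)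

lemma sqrt_Vvar_eq:
  "sqrt (Vvar N A l)
     = \<bar>sus N l\<bar> * sqrt (bilin_form {..<nb N} (Omega N) (flow_weights N A l) (flow_weights N A l))"
  unfolding Vvar_def bilin_form_def flow_weights_def Let_def by (simp add: real_sqrt_mult)

lemma sqrt_Vvar_mixA_le:
  assumes "net_ok N" "0 \<le> t" "t \<le> 1"
  shows "sqrt (Vvar N (mixA t A B) l) \<le> (1 - t) * sqrt (Vvar N A l) + t * sqrt (Vvar N B l)"
proof -
  let ?q = "\<lambda>C. sqrt (bilin_form {..<nb N} (Omega N) (flow_weights N C l) (flow_weights N C l))"
  have "?q (mixA t A B) \<le> (1 - t) * ?q A + t * ?q B"
    unfolding flow_weights_mixA
    by (rule sqrt_bilin_form_convex[OF net_ok_Omega_psd[OF assms(1)] assms(2,3)])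
  then have "\<bar>sus N l\<bar> * ?q (mixA t A B) \<le> \<bar>sus N l\<bar> * ((1 - t) * ?q A + t * ?q B)"
    by (rule mult_left_mono) simp
  then show ?thesis unfolding sqrt_Vvar_eq by (simp add: algebra_simps)
qed

lemma margin_constraint_mix:
  fixes t nu s a b x x1 x2 c :: real
  assumes t: "0 \<le> t" "t \<le> 1" and "nu \<ge> 0"
    and s: "s \<le> (1 - t) * a + t * b" and x: "x \<le> (1 - t) * x1 + t * x2"
    and 1: "x1 + nu * a \<le> c" and 2: "x2 + nu * b \<le> c"
  shows "x + nu * s \<le> c"
proof -
  have "nu * s \<le> nu * ((1 - t) * a + t * b)" using s \<open>nu \<ge> 0\<close> by (rule mult_left_mono)
  moreover have "(1 - t) * (x1 + nu * a) \<le> (1 - t) * c" using 1 t by (simp add: mult_left_mono)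
  moreover have "t * (x2 + nu * b) \<le> t * c" using 2 t by (simp add: mult_left_mono)
  ultimately show ?thesis using x by (simp add: algebra_simps)
qed

lemma abs_convex_combination_le:
  fixes x y t :: real
  assumes "0 \<le> t" "t \<le> 1"
  shows "\<bar>(1 - t) * x + t * y\<bar> \<le> (1 - t) * \<bar>x\<bar> + t * \<bar>y\<bar>"
  using abs_triangle_ineq[of "(1 - t) * x" "t * y"] assms by (simp add: abs_mult)

lemma dc_cons_mix:
  assumes ok: "net_ok N" and t: "0 \<le> t" "t \<le> 1"
    and d1: "dc_cons N 1 A p th f" and d2: "dc_cons N 1 B p' th' f'"
  shows "dc_cons N 1 (mixA t A B) (mixv t p p') (mixv t th th') (mixv t f f')"
  unfolding dc_cons_def
proof (intro conjI allI impI ballI)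
  fix i assume "i < nb N" "i \<notin> gens N"
  then show "mixv t p p' i = 0" using d1 d2 unfolding dc_cons_def mixv_def by simp
next
  fix i assume i: "i < nb N"
  have "(\<Sum>j<nb N. Bmat N i j * mixv t th th' j)
     = (1 - t) * (\<Sum>j<nb N. Bmat N i j * th j) + t * (\<Sum>j<nb N. Bmat N i j * th' j)"
    unfolding mixv_def by (simp add: sum_distrib_left sum.distrib[symmetric] algebra_simps)
  also have "\<dots> = mixv t p p' i + mu N i - load N i"
  proof -
    have balance: "(\<Sum>j<nb N. Bmat N i j * th j) = p i + mu N i - load N i"
      "(\<Sum>j<nb N. Bmat N i j * th' j) = p' i + mu N i - load N i"
      using d1 d2 i unfolding dc_cons_def by blast+
    show ?thesis unfolding balance mixv_def by (simp add: algebra_simps)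
  qed
  finally show "(\<Sum>j<nb N. Bmat N i j * mixv t th th' j) = mixv t p p' i + mu N i - load N i" .
next
  fix l assume "l < nl N"
  then have flow: "f l = sus N l * (th (fr N l) - th (to N l))"
    "f' l = sus N l * (th' (fr N l) - th' (to N l))"
    using d1 d2 unfolding dc_cons_def by blast+
  show "mixv t f f' l = sus N l * (mixv t th th' (fr N l) - mixv t th th' (to N l))"
    unfolding flow mixv_def by (simp add: algebra_simps)
next
  fix l assume l: "l < nl N"
  then have nu: "nu_line N l \<ge> 0" using ok unfolding net_ok_def by blast
  have "\<bar>f l\<bar> + nu_line N l * sqrt (Vvar N A l) \<le> fmax N l"
    "\<bar>f' l\<bar> + nu_line N l * sqrt (Vvar N B l) \<le> fmax N l"
    using d1 d2 l unfolding dc_cons_def by auto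
  from margin_constraint_mix[OF t nu sqrt_Vvar_mixA_le[OF ok t]
      abs_convex_combination_le[OF t] this]
  show "\<bar>mixv t f f' l\<bar> + nu_line N l * sqrt (Vvar N (mixA t A B) l) \<le> 1 * fmax N l"
    unfolding mixv_def by simp
next
  fix i assume i: "i \<in> gens N"
  then have nu: "nu_gen N i \<ge> 0" using ok unfolding net_ok_def by blast
  note rowvar = sqrt_rowvar_mixA_le[OF ok t, of A B i]
  show "pmin N i + nu_gen N i * sqrt (rowvar N (mixA t A B) i) \<le> mixv t p p' i"
    using margin_constraint_mix[OF t nu rowvar, of "pmin N i - mixv t p p' i"
        "pmin N i - p i" "pmin N i - p' i" 0] d1 d2 i
    unfolding dc_cons_def mixv_def by (simp add: algebra_simps)
  show "mixv t p p' i \<le> pmax N i - nu_gen N i * sqrt (rowvar N (mixA t A B) i)"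
    using margin_constraint_mix[OF t nu rowvar, of "mixv t p p' i - pmax N i"
        "p i - pmax N i" "p' i - pmax N i" 0] d1 d2 i
    unfolding dc_cons_def mixv_def by (simp add: algebra_simps)
qed

lemma compatible_mix:
  assumes ok: "net_ok N" and t: "0 \<le> t" "t \<le> 1"
    and "compatible N f A" "compatible N f' B"
  shows "compatible N (mixv t f f') (mixA t A B)"
proof -
  obtain p th p' th' where d1: "dc_cons N 1 A p th f" and d2: "dc_cons N 1 B p' th' f'"
    and K: "A \<in> Kset N" "B \<in> Kset N"
    using assms(4,5) unfolding compatible_def by blast
  have "mixA t A B \<in> Kset N" using ok K t unfolding net_ok_def by auto
  then show ?thesis unfolding compatible_def using dc_cons_mix[OF ok t d1 d2] by blast
qed

lemma dc_cons_relax_limit: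
  assumes "dc_cons N c A p th f" "c \<le> 1" "net_ok N"
  shows "dc_cons N 1 A p th f"
proof -
  have "c * fmax N l \<le> fmax N l" if "l < nl N" for l
    using assms(2,3) that unfolding net_ok_def by (simp add: mult_left_le_one_le)
  with assms(1) show ?thesis unfolding dc_cons_def by (fastforce intro: order_trans)
qed

context
  fixes N F Dl p0 f0 A0 tau0 Nit k Asq tausq psq fsq thsq shat Ahat lam
  assumes run: "vs_reaches_step2 N F Dl p0 f0 A0 tau0 Nit k Asq tausq psq fsq thsq shat Ahat lam"
begin

lemma vs_reaches_step2_tau_pos:
  assumes "1 \<le> j" "j \<le> k"
  shows "tausq j > 0"
  using assms
proof (induction j rule: nat_induct_at_least)
  case base
  then show ?case using run unfolding vs_reaches_step2_def by simp
next
  case (Suc j)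
  then have "j \<in> {1..<k}" by simp
  then have "tausq (j + 1) = tausq j / 2"
    using run unfolding vs_reaches_step2_def by blast
  with Suc show ?case by simp
qed

lemma vs_reaches_step2_Kset: "Asq (k - 1) \<in> Kset N"
proof (cases "k = 1")
  case True
  then show ?thesis using run unfolding vs_reaches_step2_def sc_feasible_def by simp
next
  case False
  then have "k - 1 \<in> {1..<k}" using run unfolding vs_reaches_step2_def by auto
  then have "compatible N (fsq (k - 1)) (Asq (k - 1))"
    using run unfolding vs_reaches_step2_def by (metis (no_types, lifting))
  then show ?thesis unfolding compatible_def by simp
qed

lemma vs_reaches_step2_compatible:
  assumes "net_ok N"
  shows "compatible N (fsq k) (Asq (k - 1))"
proof -
  have k: "1 \<le> k" using run unfolding vs_reaches_step2_def by simp
  then have "dc_cons N (1 - tausq k) (Asq (k - 1)) (psq k) (thsq k) (fsq k)"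
    using run unfolding vs_reaches_step2_def reroute_opt_def by auto
  then have "dc_cons N 1 (Asq (k - 1)) (psq k) (thsq k) (fsq k)"
    using dc_cons_relax_limit vs_reaches_step2_tau_pos[OF k order_refl] assms by simp
  then show ?thesis using vs_reaches_step2_Kset unfolding compatible_def by blast
qed

end

theorem lemma5:
  assumes "net_ok N"
    and "metric_ok N F Dl"
    and "vs_reaches_step2 N F Dl p0 f0 A0 tau0 Nit k Asq tausq psq fsq thsq shat Ahat lam"
    and "compatible N fb Ab"
  shows "\<exists>\<gamma>. 0 < \<gamma> \<and> \<gamma> \<le> 1 \<and>
           (\<forall>t. 0 \<le> t \<and> t \<le> \<gamma> \<longrightarrow>
              compatible N (mixv t (fsq k) fb) (mixA t (Asq (k - 1)) Ab))"
proof -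
  have "compatible N (fsq k) (Asq (k - 1))"
    using vs_reaches_step2_compatible[OF assms(3,1)] .
  then have "\<forall>t. 0 \<le> t \<and> t \<le> 1 \<longrightarrow> compatible N (mixv t (fsq k) fb) (mixA t (Asq (k - 1)) Ab)"
    using compatible_mix[OF assms(1) _ _ _ assms(4)] by blast
  then show ?thesis by (intro exI[of _ 1]) simp
qed

end
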